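(* Let $\beta:[r]\to[2n]$ be qubit-injective and $R\in B_{2n}(T_{TCR}(\beta))$. If there exist $m$, $L\in L_m(P_m)$ and an increasing $\alpha:[r]\to[m]$ such that $L\,\Pi(\alpha,\beta)=\Pi(\alpha,\beta)\,R$, then $R=I_{2n}$.
   Context: $\mathbb{F}$ is the field with two elements, $[N]=\{1,\dots,N\}$, $e_{N,i}$ standard basis column vectors, $I_N$ identity. $P_m=\{(i,j):i,j\in[m],i>j\}$, $L_m(P_m)$ the lower unitriangular $m\times m$ matrices over $\mathbb{F}$. $R_{2n}=\sum_{i=1}^{2n}e_{2n,i}e_{2n,2n+1-i}^{\top}$; $\mathrm{Sp}_{2n}=\{C:C^{\top}R_{2n}C=R_{2n}\}$. For $T\subseteq P_{2n}$ transitive and closed under reversal, $B_{2n}(T)=\big(I_{2n}+\mathrm{span}_{\mathbb{F}}\{e_{2n,i}e_{2n,j}^{\top}:(i,j)\in T\}\big)\cap\mathrm{Sp}_{2n}$. $\Pi(\alpha,\beta)=\sum_{i=1}^re_{m,\alpha(i)}e_{2n,\beta(i)}^{\top}\in\mathbb{F}^{m\times2n}$. $Q_n(i)=\min(i,2n+1-i)$; $\beta$ is qubit-injective if $Q_n\circ\beta$ is injective. $T_M(\beta)=\{(i,j):i\in\mathrm{Im}(\beta),j<i,Q_n(j)\notin\{Q_n(\beta(1)),\dots,Q_n(\beta(\beta^{-1}(i)-1))\}\}$, $T_{MR}(\beta)=\{(i,j):(2n+1-j,2n+1-i)\in T_M(\beta)\}$, $T_{TCR}(\beta)=T_M(\beta)\cup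 T_{MR}(\beta)$. *)

theory Defs
  imports "HOL-Library.Z2" "Jordan_Normal_Form.Matrix"
begin

(* The field F_2 is the type bit (HOL-Library.Z2).  Matrices are Jordan_Normal_Form
   matrices; the paper's 1-based index i corresponds to the 0-based row/column i-1. *)

definition Rmat :: "nat \<Rightarrow> bit mat" where
  "Rmat n = mat (2*n) (2*n) (\<lambda>(i,j). if (i+1) + (j+1) = 2*n + 1 then 1 else 0)"

definition Sp :: "nat \<Rightarrow> bit mat set" where
  "Sp n = {C \<in> carrier_mat (2*n) (2*n). transpose_mat C * Rmat n * C = Rmat n}"

definition Pset :: "nat \<Rightarrow> (nat \<times> nat) set" where
  "Pset m = {(i,j). i \<in> {1..m} \<and> j \<in> {1..m} \<and> i > j}"

(* L_m(P_m): I_m + span{e_i e_j^T : (i,j) in P_m}, i.e. lower unitriangular *)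
definition Lmat :: "nat \<Rightarrow> bit mat set" where
  "Lmat m = {L \<in> carrier_mat m m. \<forall>i<m. \<forall>j<m.
      (i+1, j+1) \<notin> Pset m \<longrightarrow> L $$ (i,j) = (if i = j then 1 else 0)}"

(* B_{2n}(T) = (I_{2n} + span{e_i e_j^T : (i,j) in T}) \<inter> Sp_{2n} *)
definition Bgrp :: "nat \<Rightarrow> (nat \<times> nat) set \<Rightarrow> bit mat set" where
  "Bgrp n T = {C \<in> carrier_mat (2*n) (2*n). \<forall>i<2*n. \<forall>j<2*n.
      (i+1, j+1) \<notin> T \<longrightarrow> C $$ (i,j) = (if i = j then 1 else 0)} \<inter> Sp n"

definition PiMat :: "nat \<Rightarrow> nat \<Rightarrow> nat \<Rightarrow> (nat \<Rightarrow> nat) \<Rightarrow> (nat \<Rightarrow> nat) \<Rightarrow> bit mat" where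
  "PiMat m n r \<alpha> \<beta> = mat m (2*n) (\<lambda>(i,j).
      \<Sum>k\<in>{1..r}. if \<alpha> k = i+1 \<and> \<beta> k = j+1 then 1 else 0)"

definition Q :: "nat \<Rightarrow> nat \<Rightarrow> nat" where
  "Q n i = min i (2*n + 1 - i)"

definition qubit_injective :: "nat \<Rightarrow> nat \<Rightarrow> (nat \<Rightarrow> nat) \<Rightarrow> bool" where
  "qubit_injective n r \<beta> \<longleftrightarrow> inj_on (Q n \<circ> \<beta>) {1..r}"

definition T_M :: "nat \<Rightarrow> nat \<Rightarrow> (nat \<Rightarrow> nat) \<Rightarrow> (nat \<times> nat) set" where
  "T_M n r \<beta> = {(i,j). i \<in> \<beta> ` {1..r} \<and> j \<in> {1..2*n} \<and> j < i \<and>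
      Q n j \<notin> (Q n \<circ> \<beta>) ` {1..<the_inv_into {1..r} \<beta> i}}"

definition T_MR :: "nat \<Rightarrow> nat \<Rightarrow> (nat \<Rightarrow> nat) \<Rightarrow> (nat \<times> nat) set" where
  "T_MR n r \<beta> = {(i,j). i \<in> {1..2*n} \<and> j \<in> {1..2*n} \<and>
      (2*n + 1 - j, 2*n + 1 - i) \<in> T_M n r \<beta>}"

definition T_TCR :: "nat \<Rightarrow> nat \<Rightarrow> (nat \<Rightarrow> nat) \<Rightarrow> (nat \<times> nat) set" where
  "T_TCR n r \<beta> = T_M n r \<beta> \<union> T_MR n r \<beta>"

end

theory Submission
  imports Defs "Jordan_Normal_Form.Determinant"
begin

(* Read the row alpha(k) of L Pi = Pi R: on the right it is the row beta(k) of R; on the left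
   its entry in column beta(l) is L(alpha(k), alpha(l)), and it vanishes in columns outside
   the image of beta.  A position (beta(k), beta(l)) of T_TCR forces l > k (it cannot lie in
   the reflected part T_MR, by qubit-injectivity), and then L(alpha(k), alpha(l)) = 0 since
   L is lower unitriangular and alpha is increasing.  So the rows beta(k) of R are unit rows,
   and R R_2n R^T = R_2n turns them into unit columns 2n+1-beta(k).  Every position of T_TCR
   lies in one of these rows (T_M) or columns (T_MR), hence R = I. *)

lemma transpose_preserves_form:
  fixes A J :: "'a::field mat"
  assumes A: "A \<in> carrier_mat k k" and J: "J \<in> carrier_mat k k" and JJ: "J * J = 1\<^sub>m k"
    and AJA: "transpose_mat A * J * A = J"
  shows "A * J * transpose_mat A = J"
proof -
  have AT: "transpose_mat A \<in> carrier_mat k k" using A by simp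
  have "(J * transpose_mat A * J) * A = J * (transpose_mat A * J * A)"
    using A J AT by (simp add: assoc_mult_mat[of _ k k _ k _ k])
  also have "\<dots> = 1\<^sub>m k" using AJA JJ by simp
  finally have "A * (J * transpose_mat A * J) = 1\<^sub>m k"
    using mat_mult_left_right_inverse[of "J * transpose_mat A * J" k A] A J AT by auto
  moreover have "A * J * transpose_mat A = (A * (J * transpose_mat A * J)) * J"
    using A J AT JJ by (simp add: assoc_mult_mat[of _ k k _ k _ k])
  ultimately show ?thesis using J by simp
qed

lemma Rmat_carrier: "Rmat n \<in> carrier_mat (2*n) (2*n)"
  by (simp add: Rmat_def)

lemma index_mult_Rmat:
  assumes A: "A \<in> carrier_mat k (2*n)" and i: "i < k" and j: "j < 2*n"
  shows "(A * Rmat n) $$ (i, j) = A $$ (i, 2*n - 1 - j)"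
proof -
  have "(A * Rmat n) $$ (i, j) = (\<Sum>p<2*n. A $$ (i, p) * Rmat n $$ (p, j))"
    using A i j by (simp add: Rmat_def scalar_prod_def lessThan_atLeast0)
  also have "\<dots> = (\<Sum>p<2*n. if p = 2*n - 1 - j then A $$ (i, p) else 0)"
    using j by (intro sum.cong) (auto simp: Rmat_def)
  also have "\<dots> = A $$ (i, 2*n - 1 - j)" using j by simp
  finally show ?thesis .
qed

lemma Rmat_squared: "Rmat n * Rmat n = 1\<^sub>m (2*n)"
proof (rule eq_matI)
  fix i j assume i: "i < dim_row (1\<^sub>m (2*n))" and j: "j < dim_col (1\<^sub>m (2*n))"
  then have "(Rmat n * Rmat n) $$ (i, j) = Rmat n $$ (i, 2*n - 1 - j)"
    using index_mult_Rmat[OF Rmat_carrier] by simp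
  also have "\<dots> = 1\<^sub>m (2*n) $$ (i, j)" using i j by (auto simp: Rmat_def)
  finally show "(Rmat n * Rmat n) $$ (i, j) = 1\<^sub>m (2*n) $$ (i, j)" .
qed (auto simp: Rmat_def)

lemma Sp_transpose:
  assumes "R \<in> Sp n"
  shows "R * Rmat n * transpose_mat R = Rmat n"
  using assms Rmat_carrier Rmat_squared by (auto simp: Sp_def intro: transpose_preserves_form)

lemma Sp_row_unit_imp_col_unit:
  assumes R: "R \<in> Sp n" and i: "i < 2*n" and row_i: "row R i = unit_vec (2*n) i"
  shows "col R (2*n - 1 - i) = unit_vec (2*n) (2*n - 1 - i)"
proof (rule eq_vecI)
  have Rc: "R \<in> carrier_mat (2*n) (2*n)" using R by (simp add: Sp_def)
  fix a assume "a < dim_vec (unit_vec (2*n) (2*n - 1 - i))"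
  then have a: "a < 2*n" by simp
  have "Rmat n $$ (a, i) = (R * Rmat n * transpose_mat R) $$ (a, i)"
    using Sp_transpose[OF R] by simp
  also have "\<dots> = row (R * Rmat n) a \<bullet> row R i"
    using Rc a i Rmat_carrier by simp
  also have "\<dots> = (R * Rmat n) $$ (a, i)"
    using Rc a i Rmat_carrier[of n] row_i by simp
  also have "\<dots> = R $$ (a, 2*n - 1 - i)"
    using index_mult_Rmat[OF Rc a i] .
  finally show "col R (2*n - 1 - i) $ a = unit_vec (2*n) (2*n - 1 - i) $ a"
    using Rc a i by (auto simp: Rmat_def split: if_splits)
qed (use R in \<open>auto simp: Sp_def\<close>)

lemma PiMat_carrier: "PiMat m n r \<alpha> \<beta> \<in> carrier_mat m (2*n)"
  by (simp add: PiMat_def)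

lemma index_PiMat_row:
  assumes inj: "inj_on \<alpha> {1..r}" and k: "k \<in> {1..r}" and \<alpha>k: "\<alpha> k \<in> {1..m}" and j: "j < 2*n"
  shows "PiMat m n r \<alpha> \<beta> $$ (\<alpha> k - 1, j) = (if \<beta> k = j + 1 then 1 else 0)"
proof -
  have "PiMat m n r \<alpha> \<beta> $$ (\<alpha> k - 1, j) =
      (\<Sum>k'\<in>{1..r}. if \<alpha> k' = \<alpha> k - 1 + 1 \<and> \<beta> k' = j + 1 then 1 else 0)"
    using \<alpha>k j by (simp add: PiMat_def del: atLeastAtMost_iff) auto
  also have "\<dots> = (\<Sum>k'\<in>{1..r}. if k' = k then (if \<beta> k = j + 1 then 1 else 0) else 0)"
    using \<alpha>k k inj by (intro sum.cong) (auto dest: inj_onD)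
  also have "\<dots> = (if \<beta> k = j + 1 then 1 else 0)" using k by simp
  finally show ?thesis .
qed

lemma index_PiMat_col:
  assumes inj: "inj_on \<beta> {1..r}" and l: "l \<in> {1..r}" and \<beta>l: "\<beta> l \<in> {1..2*n}" and p: "p < m"
  shows "PiMat m n r \<alpha> \<beta> $$ (p, \<beta> l - 1) = (if \<alpha> l = p + 1 then 1 else 0)"
proof -
  have "PiMat m n r \<alpha> \<beta> $$ (p, \<beta> l - 1) =
      (\<Sum>k'\<in>{1..r}. if \<alpha> k' = p + 1 \<and> \<beta> k' = \<beta> l - 1 + 1 then 1 else 0)"
    using \<beta>l p by (simp add: PiMat_def del: atLeastAtMost_iff) auto
  also have "\<dots> = (\<Sum>k'\<in>{1..r}. if k' = l then (if \<alpha> l = p + 1 then 1 else 0) else 0)"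
    using \<beta>l l inj by (intro sum.cong) (auto dest: inj_onD)
  also have "\<dots> = (if \<alpha> l = p + 1 then 1 else 0)" using l by simp
  finally show ?thesis .
qed

lemma index_PiMat_outside_image:
  assumes "j + 1 \<notin> \<beta> ` {1..r}" and "p < m" and "j < 2*n"
  shows "PiMat m n r \<alpha> \<beta> $$ (p, j) = 0"
  using assms by (auto simp: PiMat_def intro!: sum.neutral) (metis atLeastAtMost_iff image_eqI)

lemma index_PiMat_mult:
  assumes inj: "inj_on \<alpha> {1..r}" and k: "k \<in> {1..r}"
    and \<alpha>k: "\<alpha> k \<in> {1..m}" and \<beta>k: "\<beta> k \<in> {1..2*n}"
    and B: "B \<in> carrier_mat (2*n) c" and j: "j < c"
  shows "(PiMat m n r \<alpha> \<beta> * B) $$ (\<alpha> k - 1, j) = B $$ (\<beta> k - 1, j)"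
proof -
  have i: "\<alpha> k - 1 < m" and p: "\<beta> k - 1 < 2*n" using \<alpha>k \<beta>k by auto
  have "(PiMat m n r \<alpha> \<beta> * B) $$ (\<alpha> k - 1, j) =
      (\<Sum>p<2*n. PiMat m n r \<alpha> \<beta> $$ (\<alpha> k - 1, p) * B $$ (p, j))"
    using PiMat_carrier[of m n r \<alpha> \<beta>] B i j by (simp add: scalar_prod_def lessThan_atLeast0)
  also have "\<dots> = (\<Sum>p<2*n. if p = \<beta> k - 1 then B $$ (p, j) else 0)"
    using index_PiMat_row[OF inj k \<alpha>k] \<beta>k by (intro sum.cong) auto
  also have "\<dots> = B $$ (\<beta> k - 1, j)" using p by simp
  finally show ?thesis .
qed

lemma index_mult_PiMat:
  assumes inj: "inj_on \<beta> {1..r}" and l: "l \<in> {1..r}"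
    and \<alpha>l: "\<alpha> l \<in> {1..m}" and \<beta>l: "\<beta> l \<in> {1..2*n}"
    and A: "A \<in> carrier_mat c m" and i: "i < c"
  shows "(A * PiMat m n r \<alpha> \<beta>) $$ (i, \<beta> l - 1) = A $$ (i, \<alpha> l - 1)"
proof -
  have j: "\<beta> l - 1 < 2*n" and p: "\<alpha> l - 1 < m" using \<alpha>l \<beta>l by auto
  have "(A * PiMat m n r \<alpha> \<beta>) $$ (i, \<beta> l - 1) =
      (\<Sum>p<m. A $$ (i, p) * PiMat m n r \<alpha> \<beta> $$ (p, \<beta> l - 1))"
    using PiMat_carrier[of m n r \<alpha> \<beta>] A i j by (simp add: scalar_prod_def lessThan_atLeast0)
  also have "\<dots> = (\<Sum>p<m. if p = \<alpha> l - 1 then A $$ (i, p) else 0)"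
    using index_PiMat_col[OF inj l \<beta>l] \<alpha>l by (intro sum.cong) auto
  also have "\<dots> = A $$ (i, \<alpha> l - 1)" using p by simp
  finally show ?thesis .
qed

lemma index_mult_PiMat_outside_image:
  assumes "j + 1 \<notin> \<beta> ` {1..r}" and "A \<in> carrier_mat c m" and "i < c" and "j < 2*n"
  shows "(A * PiMat m n r \<alpha> \<beta>) $$ (i, j) = 0"
proof -
  have "(A * PiMat m n r \<alpha> \<beta>) $$ (i, j) =
      (\<Sum>p<m. A $$ (i, p) * PiMat m n r \<alpha> \<beta> $$ (p, j))"
    using PiMat_carrier[of m n r \<alpha> \<beta>] assms by (simp add: scalar_prod_def lessThan_atLeast0)
  also have "\<dots> = 0"
    using index_PiMat_outside_image[OF assms(1) _ assms(4)] by (intro sum.neutral) auto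
  finally show ?thesis .
qed

lemma Lmat_above_diagonal:
  assumes "L \<in> Lmat m" and "i < j" and "j < m"
  shows "L $$ (i, j) = 0"
  using assms by (auto simp: Lmat_def Pset_def)

lemma T_TCR_below_diagonal: "(i, j) \<in> T_TCR n r \<beta> \<Longrightarrow> j < i"
  by (auto simp: T_TCR_def T_M_def T_MR_def)

lemma T_TCR_cases:
  assumes "(i, j) \<in> T_TCR n r \<beta>"
  obtains k where "k \<in> {1..r}" "\<beta> k = i" | k where "k \<in> {1..r}" "\<beta> k = 2*n + 1 - j"
  using assms by (force simp: T_TCR_def T_M_def T_MR_def)

lemma Q_reflect: "x \<le> 2*n + 1 \<Longrightarrow> Q n (2*n + 1 - x) = Q n x"
  by (auto simp: Q_def)

lemma T_TCR_image_pair_increasing: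
  assumes qinj: "qubit_injective n r \<beta>" and k: "k \<in> {1..r}" and l: "l \<in> {1..r}"
    and kl: "(\<beta> k, \<beta> l) \<in> T_TCR n r \<beta>"
  shows "k < l"
proof -
  have inj: "inj_on (Q n \<circ> \<beta>) {1..r}" using qinj by (simp add: qubit_injective_def)
  have "(\<beta> k, \<beta> l) \<notin> T_MR n r \<beta>"
  proof
    assume "(\<beta> k, \<beta> l) \<in> T_MR n r \<beta>"
    then obtain l' where l': "l' \<in> {1..r}" "\<beta> l' = 2*n + 1 - \<beta> l" and \<beta>l: "\<beta> l \<le> 2*n"
      by (auto simp: T_MR_def T_M_def)
    then have "(Q n \<circ> \<beta>) l' = (Q n \<circ> \<beta>) l" using Q_reflect[of "\<beta> l" n] by simp
    then have "l' = l" using inj_onD[OF inj _ l'(1) l] by blast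
    then show False using l' \<beta>l by arith
  qed
  then have "(\<beta> k, \<beta> l) \<in> T_M n r \<beta>" using kl by (simp add: T_TCR_def)
  moreover have "the_inv_into {1..r} \<beta> (\<beta> k) = k"
    using the_inv_into_f_f[OF inj_on_imageI2[OF inj] k] .
  ultimately have "l \<notin> {1..<k}" and "l \<noteq> k" by (auto simp: T_M_def)
  then show ?thesis using l by auto
qed

lemma Bgrp_index_outside:
  assumes "C \<in> Bgrp n T" and "i < 2*n" and "j < 2*n" and "(i + 1, j + 1) \<notin> T"
  shows "C $$ (i, j) = 1\<^sub>m (2*n) $$ (i, j)"
  using assms by (simp add: Bgrp_def)

lemma index_Lmat_mult_PiMat_zero:
  assumes L: "L \<in> Lmat m" and \<alpha>: "\<alpha> ` {1..r} \<subseteq> {1..m}" and mono: "strict_mono_on {1..r} \<alpha>"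
    and \<beta>: "\<beta> ` {1..r} \<subseteq> {1..2*n}" and inj\<beta>: "inj_on \<beta> {1..r}"
    and k: "k \<in> {1..r}" and j: "j < 2*n" and later: "\<And>l. l \<in> {1..r} \<Longrightarrow> \<beta> l = j + 1 \<Longrightarrow> k < l"
  shows "(L * PiMat m n r \<alpha> \<beta>) $$ (\<alpha> k - 1, j) = 0"
proof -
  have Lc: "L \<in> carrier_mat m m" using L by (simp add: Lmat_def)
  have \<alpha>k: "\<alpha> k \<in> {1..m}" using \<alpha> k by blast
  then have p: "\<alpha> k - 1 < m" by auto
  show ?thesis
  proof (cases "j + 1 \<in> \<beta> ` {1..r}")
    case False
    then show ?thesis using index_mult_PiMat_outside_image[OF False Lc p j] by simp
  next
    case True
    then obtain l where l: "l \<in> {1..r}" and \<beta>l_j: "\<beta> l = j + 1" by auto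
    have \<alpha>l: "\<alpha> l \<in> {1..m}" and \<beta>l: "\<beta> l \<in> {1..2*n}" using \<alpha> \<beta> l by blast+
    have "\<alpha> k < \<alpha> l" using later[OF l \<beta>l_j] mono k l by (simp add: strict_mono_on_def)
    then have "\<alpha> k - 1 < \<alpha> l - 1" using \<alpha>k by auto
    then have "L $$ (\<alpha> k - 1, \<alpha> l - 1) = 0" using Lmat_above_diagonal[OF L] \<alpha>l by auto
    then show ?thesis
      using index_mult_PiMat[of \<beta> r l \<alpha> m n, OF inj\<beta> l \<alpha>l \<beta>l Lc p] \<beta>l_j by simp
  qed
qed

lemma Bgrp_T_TCR_row_unit:
  assumes \<beta>: "\<beta> ` {1..r} \<subseteq> {1..2*n}" and qinj: "qubit_injective n r \<beta>"
    and R: "R \<in> Bgrp n (T_TCR n r \<beta>)" and L: "L \<in> Lmat m"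
    and \<alpha>: "\<alpha> ` {1..r} \<subseteq> {1..m}" and mono: "strict_mono_on {1..r} \<alpha>"
    and intertwine: "L * PiMat m n r \<alpha> \<beta> = PiMat m n r \<alpha> \<beta> * R" and k: "k \<in> {1..r}"
  shows "row R (\<beta> k - 1) = unit_vec (2*n) (\<beta> k - 1)"
proof (rule eq_vecI)
  have Rc: "R \<in> carrier_mat (2*n) (2*n)" using R by (simp add: Bgrp_def)
  have inj\<alpha>: "inj_on \<alpha> {1..r}" using mono by (rule strict_mono_on_imp_inj_on)
  have inj\<beta>: "inj_on \<beta> {1..r}"
    using qinj by (auto simp: qubit_injective_def intro: inj_on_imageI2)
  have \<alpha>k: "\<alpha> k \<in> {1..m}" and \<beta>k: "\<beta> k \<in> {1..2*n}" using \<alpha> \<beta> k by blast+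
  then have i: "\<beta> k - 1 < 2*n" and i_Suc: "\<beta> k - 1 + 1 = \<beta> k" by auto
  fix j assume "j < dim_vec (unit_vec (2*n) (\<beta> k - 1))"
  then have j: "j < 2*n" by simp
  have "R $$ (\<beta> k - 1, j) = 1\<^sub>m (2*n) $$ (\<beta> k - 1, j)"
  proof (cases "(\<beta> k, j + 1) \<in> T_TCR n r \<beta>")
    case False
    then show ?thesis using Bgrp_index_outside[OF R i j] i_Suc by simp
  next
    case True
    then have "j \<noteq> \<beta> k - 1" using T_TCR_below_diagonal by force
    moreover have "k < l" if "l \<in> {1..r}" "\<beta> l = j + 1" for l
      using T_TCR_image_pair_increasing[OF qinj k that(1)] True that(2) by simp
    then have "(L * PiMat m n r \<alpha> \<beta>) $$ (\<alpha> k - 1, j) = 0"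
      using index_Lmat_mult_PiMat_zero[OF L \<alpha> mono \<beta> inj\<beta> k j] by blast
    then have "R $$ (\<beta> k - 1, j) = 0"
      using index_PiMat_mult[of \<alpha> r k m \<beta>, OF inj\<alpha> k \<alpha>k \<beta>k Rc j] intertwine by simp
    ultimately show ?thesis using i j by simp
  qed
  then show "row R (\<beta> k - 1) $ j = unit_vec (2*n) (\<beta> k - 1) $ j" using Rc i j by simp
qed (use R in \<open>auto simp: Bgrp_def\<close>)

lemma Bgrp_T_TCR_eq_one_of_row_unit:
  assumes \<beta>: "\<beta> ` {1..r} \<subseteq> {1..2*n}" and R: "R \<in> Bgrp n (T_TCR n r \<beta>)"
    and row_unit: "\<And>k. k \<in> {1..r} \<Longrightarrow> row R (\<beta> k - 1) = unit_vec (2*n) (\<beta> k - 1)"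
  shows "R = 1\<^sub>m (2*n)"
proof (rule eq_matI)
  have Rc: "R \<in> carrier_mat (2*n) (2*n)" and Sp: "R \<in> Sp n" using R by (auto simp: Bgrp_def)
  have col_unit: "col R (2*n - \<beta> k) = unit_vec (2*n) (2*n - \<beta> k)" if k: "k \<in> {1..r}" for k
  proof -
    have "\<beta> k \<in> {1..2*n}" using \<beta> k by blast
    then have i: "\<beta> k - 1 < 2*n" and reflect: "2*n - 1 - (\<beta> k - 1) = 2*n - \<beta> k" by auto
    show ?thesis using Sp_row_unit_imp_col_unit[OF Sp i row_unit[OF k]] unfolding reflect .
  qed
  fix i j assume "i < dim_row (1\<^sub>m (2*n))" "j < dim_col (1\<^sub>m (2*n))"
  then have i: "i < 2*n" and j: "j < 2*n" by auto
  show "R $$ (i, j) = 1\<^sub>m (2*n) $$ (i, j)"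
  proof (cases "(i + 1, j + 1) \<in> T_TCR n r \<beta>")
    case False
    then show ?thesis using Bgrp_index_outside[OF R i j] by simp
  next
    case True
    then show ?thesis
    proof (cases rule: T_TCR_cases)
      case (1 k)
      then show ?thesis using arg_cong[OF row_unit[OF 1(1)], of "\<lambda>v. v $ j"] Rc i j by auto
    next
      case (2 k)
      then show ?thesis using arg_cong[OF col_unit[OF 2(1)], of "\<lambda>v. v $ i"] Rc i j by auto
    qed
  qed
qed (use R in \<open>auto simp: Bgrp_def\<close>)

theorem lemma9:
  fixes n r :: nat and \<beta> :: "nat \<Rightarrow> nat" and R :: "bit mat"
  assumes "\<beta> ` {1..r} \<subseteq> {1..2*n}"
    and "qubit_injective n r \<beta>"
    and "R \<in> Bgrp n (T_TCR n r \<beta>)"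
    and "\<exists>m L \<alpha>. L \<in> Lmat m \<and> \<alpha> ` {1..r} \<subseteq> {1..m} \<and> strict_mono_on {1..r} \<alpha> \<and>
           L * PiMat m n r \<alpha> \<beta> = PiMat m n r \<alpha> \<beta> * R"
  shows "R = 1\<^sub>m (2*n)"
proof -
  obtain m L \<alpha> where "L \<in> Lmat m" "\<alpha> ` {1..r} \<subseteq> {1..m}" "strict_mono_on {1..r} \<alpha>"
    "L * PiMat m n r \<alpha> \<beta> = PiMat m n r \<alpha> \<beta> * R"
    using assms(4) by blast
  then have "row R (\<beta> k - 1) = unit_vec (2*n) (\<beta> k - 1)" if "k \<in> {1..r}" for k
    using Bgrp_T_TCR_row_unit[OF assms(1-3)] that by blast
  then show ?thesis using Bgrp_T_TCR_eq_one_of_row_unit[OF assms(1,3)] by blast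
qed

end
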